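(* Let $k\ge2$ and $n\ge1$, and let $h_k$ be the complete homogeneous symmetric polynomial of degree $k$ in $x_1,\dots,x_n$. Then $\{\partial h_k/\partial x_i\mid i=1,\dots,n\}$ is a (homogeneous) system of parameters for $\mathbb{C}[x_1,\dots,x_n]$. *)

theory Defs
  imports Complex_Main "HOL-Library.Poly_Mapping"
begin

text \<open>Polynomials over the complex numbers in the variables x_0, x_1, ...:
  a monomial is a finitely supported exponent vector (finitely supported nat => nat),
  a polynomial is a finitely supported coefficient map on monomials.
  Multiplication is the convolution product of Poly_Mapping, so this is
  the commutative ring C[x_0, x_1, ...].  The ring C[x_1..x_n] of the paper is
  the subring of polynomials in the first n variables (indices 0..n-1).\<close>

type_synonym mpoly = "(nat \<Rightarrow>\<^sub>0 nat) \<Rightarrow>\<^sub>0 complex"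

definition mdeg :: "(nat \<Rightarrow>\<^sub>0 nat) \<Rightarrow> nat" where
  "mdeg m = (\<Sum>i\<in>Poly_Mapping.keys m. Poly_Mapping.lookup m i)"

definition const_poly :: "complex \<Rightarrow> mpoly" where
  "const_poly c = Poly_Mapping.single 0 c"

definition in_vars :: "nat \<Rightarrow> mpoly \<Rightarrow> bool" where
  "in_vars n p \<longleftrightarrow> (\<forall>m\<in>Poly_Mapping.keys p. Poly_Mapping.keys m \<subseteq> {..<n})"

definition homogeneous :: "nat \<Rightarrow> mpoly \<Rightarrow> bool" where
  "homogeneous d p \<longleftrightarrow> (\<forall>m\<in>Poly_Mapping.keys p. mdeg m = d)"

definition complete_hom :: "nat \<Rightarrow> nat \<Rightarrow> mpoly" where
  "complete_hom n k =
     (\<Sum>m\<in>{m. Poly_Mapping.keys m \<subseteq> {..<n} \<and> mdeg m = k}. Poly_Mapping.single m 1)"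

definition pderiv_var :: "nat \<Rightarrow> mpoly \<Rightarrow> mpoly" where
  "pderiv_var i p =
     (\<Sum>m\<in>Poly_Mapping.keys p. Poly_Mapping.single (m - Poly_Mapping.single i 1)
                     (of_nat (Poly_Mapping.lookup m i) * Poly_Mapping.lookup p m))"

definition gen_ideal :: "nat \<Rightarrow> (nat \<Rightarrow> mpoly) \<Rightarrow> mpoly set" where
  "gen_ideal n f = {\<Sum>i<n. g i * f i | g. \<forall>i<n. in_vars n (g i)}"

definition finite_dim_quotient :: "nat \<Rightarrow> mpoly set \<Rightarrow> bool" where
  "finite_dim_quotient n I \<longleftrightarrow>
     (\<exists>B. finite B \<and> (\<forall>b\<in>B. in_vars n b) \<and>
        (\<forall>p. in_vars n p \<longrightarrow>
           (\<exists>c. p - (\<Sum>b\<in>B. const_poly (c b) * b) \<in> I)))"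

text \<open>f_0..f_{n-1} is a homogeneous system of parameters of C[x_0..x_{n-1}]
  (which has Krull dimension n): n homogeneous elements of positive degree
  such that the quotient by the ideal they generate has Krull dimension 0,
  i.e. is finite-dimensional over C.\<close>
definition hom_sop :: "nat \<Rightarrow> (nat \<Rightarrow> mpoly) \<Rightarrow> bool" where
  "hom_sop n f \<longleftrightarrow>
     (\<forall>i<n. in_vars n (f i) \<and> (\<exists>d>0. homogeneous d (f i))) \<and>
     finite_dim_quotient n (gen_ideal n f)"

end

theory Submission
  imports Defs
begin

text \<open>Write h(S, d) for the complete homogeneous polynomial of degree d in the variables x_i,
  i \<in> S, let V = {0, ..., n-1}, and let J be the ideal generated by the partials \<partial>_i h(V, k).
  The identities \<partial>_i h(V, d+1) = h(V, d) + x_i \<partial>_i h(V, d) and Euler's relation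
  d h(V, d) = \<Sum>_i x_i \<partial>_i h(V, d) show, by induction on d \<ge> k, that every \<partial>_i h(V, d), and
  hence every h(V, d), lies in J. Eliminating the variables one at a time with
  h(S, d+1) = h(S - {i}, d+1) + x_i h(S, d) puts h(S, d) into J once d \<ge> k + |V - S|; for
  S = {i} this says x_i^(k+n-1) \<in> J. So the quotient by J is spanned by the finitely many
  monomials all of whose exponents are below k + n - 1.\<close>

lemma mdeg_eq_sum:
  "finite S \<Longrightarrow> Poly_Mapping.keys a \<subseteq> S \<Longrightarrow> mdeg a = (\<Sum>i\<in>S. Poly_Mapping.lookup a i)"
  unfolding mdeg_def by (rule sum.mono_neutral_left) (auto simp: in_keys_iff)

lemma mdeg_add: "mdeg (a + b) = mdeg a + mdeg b"
proof -
  let ?S = "Poly_Mapping.keys a \<union> Poly_Mapping.keys b"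
  have "mdeg (a + b) = (\<Sum>i\<in>?S. Poly_Mapping.lookup (a + b) i)"
    using keys_add[of a b] by (intro mdeg_eq_sum) auto
  also have "\<dots> = (\<Sum>i\<in>?S. Poly_Mapping.lookup a i) + (\<Sum>i\<in>?S. Poly_Mapping.lookup b i)"
    by (simp add: lookup_add sum.distrib)
  also have "\<dots> = mdeg a + mdeg b"
    by (simp add: mdeg_eq_sum[of ?S a] mdeg_eq_sum[of ?S b])
  finally show ?thesis .
qed

lemma mdeg_single [simp]: "mdeg (Poly_Mapping.single i d) = d"
  unfolding mdeg_def by simp

lemma lookup_le_mdeg: "Poly_Mapping.lookup a i \<le> mdeg a"
  unfolding mdeg_def
  by (cases "i \<in> Poly_Mapping.keys a") (auto simp: in_keys_iff intro: member_le_sum)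

lemma single_add_diff_single:
  "d \<le> Poly_Mapping.lookup a i \<Longrightarrow> Poly_Mapping.single i d + (a - Poly_Mapping.single i d) = (a :: nat \<Rightarrow>\<^sub>0 nat)"
  by (rule poly_mapping_eqI) (auto simp: lookup_add lookup_minus lookup_single when_def)

text \<open>A separate constant because the simplifier rewrites Poly_Mapping.single i 1 on exponent
  vectors to Poly_Mapping.single i (Suc 0), so rewrite rules stated with 1 would never fire.\<close>

definition var_monomial :: "nat \<Rightarrow> nat \<Rightarrow>\<^sub>0 nat" where
  "var_monomial i = Poly_Mapping.single i 1"

lemma lookup_var_monomial [simp]: "Poly_Mapping.lookup (var_monomial i) j = (if i = j then 1 else 0)"
  by (simp add: var_monomial_def lookup_single)

lemma var_monomial_add_diff_iff:
  "var_monomial i + (a - var_monomial i) = a \<longleftrightarrow> Poly_Mapping.lookup a i \<noteq> 0"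
proof
  assume "var_monomial i + (a - var_monomial i) = a"
  then have "Poly_Mapping.lookup (var_monomial i + (a - var_monomial i)) i = Poly_Mapping.lookup a i"
    by (rule arg_cong)
  then show "Poly_Mapping.lookup a i \<noteq> 0"
    by (simp add: lookup_add)
qed (simp add: var_monomial_def single_add_diff_single)

lemma finite_monomials_bounded:
  assumes "finite V"
  shows "finite {a :: nat \<Rightarrow>\<^sub>0 nat. Poly_Mapping.keys a \<subseteq> V \<and> (\<forall>i. Poly_Mapping.lookup a i \<le> K)}"
    (is "finite ?A")
proof (rule finite_imageD)
  have "Poly_Mapping.lookup ` ?A \<subseteq> {f. \<forall>i. (i \<in> V \<longrightarrow> f i \<in> {..K}) \<and> (i \<notin> V \<longrightarrow> f i = 0)}"
    by (auto simp: in_keys_iff)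
  then show "finite (Poly_Mapping.lookup ` ?A)"
    by (rule finite_subset) (use finite_set_of_finite_funs[OF assms, of "{..K}" 0] in simp)
  show "inj_on Poly_Mapping.lookup ?A"
    by (simp add: inj_on_def)
qed

definition monomials_of_degree :: "nat set \<Rightarrow> nat \<Rightarrow> (nat \<Rightarrow>\<^sub>0 nat) set" where
  "monomials_of_degree V d = {a. Poly_Mapping.keys a \<subseteq> V \<and> mdeg a = d}"

lemma finite_monomials_of_degree: "finite V \<Longrightarrow> finite (monomials_of_degree V d)"
  unfolding monomials_of_degree_def
  by (rule finite_subset[OF _ finite_monomials_bounded[of V d]]) (auto intro: le_trans[OF lookup_le_mdeg])

lemma add_var_monomial_in_monomials_of_degree_iff [simp]:
  "a + var_monomial i \<in> monomials_of_degree V (Suc d) \<longleftrightarrow>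
     i \<in> V \<and> a \<in> monomials_of_degree V d"
proof -
  have "Poly_Mapping.keys (a + var_monomial i) = insert i (Poly_Mapping.keys a)"
    by (auto simp: in_keys_iff lookup_add split: if_splits)
  then show ?thesis
    by (simp add: monomials_of_degree_def mdeg_add var_monomial_def)
qed

lemma diff_var_monomial_in_monomials_of_degree_iff:
  "Poly_Mapping.lookup a i \<noteq> 0 \<Longrightarrow> i \<in> V \<Longrightarrow>
     a - var_monomial i \<in> monomials_of_degree V d \<longleftrightarrow> a \<in> monomials_of_degree V (Suc d)"
  by (metis add_var_monomial_in_monomials_of_degree_iff add.commute var_monomial_add_diff_iff)

definition var :: "nat \<Rightarrow> mpoly" where
  "var i = Poly_Mapping.single (var_monomial i) 1"

lemma poly_eq_sum_monomials:
  "(p :: mpoly) = (\<Sum>a\<in>Poly_Mapping.keys p. Poly_Mapping.single a (Poly_Mapping.lookup p a))"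
  by (rule poly_mapping_eqI) (auto simp: lookup_sum lookup_single when_def in_keys_iff)

lemma lookup_single_mult:
  "Poly_Mapping.lookup (Poly_Mapping.single m c * (p :: mpoly)) a =
     (if m + (a - m) = a then c * Poly_Mapping.lookup p (a - m) else 0)"
proof -
  have "Poly_Mapping.single m c * p =
      (\<Sum>b\<in>Poly_Mapping.keys p. Poly_Mapping.single (m + b) (c * Poly_Mapping.lookup p b))"
    by (subst poly_eq_sum_monomials[of p]) (simp add: sum_distrib_left mult_single)
  then have "Poly_Mapping.lookup (Poly_Mapping.single m c * p) a =
      (\<Sum>b\<in>Poly_Mapping.keys p. if b = a - m \<and> m + (a - m) = a then c * Poly_Mapping.lookup p b else 0)"
    by (auto simp: lookup_sum lookup_single when_def intro!: sum.cong)
  then show ?thesis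
    by (auto simp: in_keys_iff)
qed

lemma lookup_var_mult:
  "Poly_Mapping.lookup (var i * p) a =
     (if Poly_Mapping.lookup a i \<noteq> 0 then Poly_Mapping.lookup p (a - var_monomial i) else 0)"
  unfolding var_def lookup_single_mult var_monomial_add_diff_iff by simp

lemma lookup_of_nat_mult:
  "Poly_Mapping.lookup (of_nat c * (p :: mpoly)) a = of_nat c * Poly_Mapping.lookup p a"
  using lookup_single_mult[of 0 "of_nat c" p a] by (simp flip: single_of_nat)

lemma lookup_pderiv_var:
  "Poly_Mapping.lookup (pderiv_var i p) a =
     of_nat (Poly_Mapping.lookup a i + 1) * Poly_Mapping.lookup p (a + var_monomial i)"
proof -
  let ?e = "var_monomial i"
  have "m - ?e = a \<and> Poly_Mapping.lookup m i \<noteq> 0 \<longleftrightarrow> m = a + ?e" for m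
  proof
    assume "m - ?e = a \<and> Poly_Mapping.lookup m i \<noteq> 0"
    then show "m = a + ?e"
      using var_monomial_add_diff_iff[of i m] by (simp add: add.commute)
  qed (simp add: lookup_add)
  then have "(of_nat (Poly_Mapping.lookup m i) * Poly_Mapping.lookup p m when m - ?e = a) =
      (if m = a + ?e then of_nat (Poly_Mapping.lookup m i) * Poly_Mapping.lookup p m else 0)" for m
    by (cases "Poly_Mapping.lookup m i = 0") (auto simp: when_def)
  then have "Poly_Mapping.lookup (pderiv_var i p) a =
      (\<Sum>m\<in>Poly_Mapping.keys p. if m = a + ?e
         then of_nat (Poly_Mapping.lookup m i) * Poly_Mapping.lookup p m else 0)"
    unfolding pderiv_var_def lookup_sum lookup_single var_monomial_def[symmetric] by simp
  then show ?thesis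
    by (auto simp: in_keys_iff lookup_add)
qed

definition complete_hom_on :: "nat set \<Rightarrow> nat \<Rightarrow> mpoly" where
  "complete_hom_on V d = (\<Sum>a\<in>monomials_of_degree V d. Poly_Mapping.single a 1)"

lemma complete_hom_eq_complete_hom_on: "complete_hom n d = complete_hom_on {..<n} d"
  unfolding complete_hom_def complete_hom_on_def monomials_of_degree_def ..

lemma lookup_complete_hom_on:
  "finite V \<Longrightarrow>
     Poly_Mapping.lookup (complete_hom_on V d) a = (if a \<in> monomials_of_degree V d then 1 else 0)"
  unfolding complete_hom_on_def
  by (simp add: lookup_sum lookup_single when_def finite_monomials_of_degree)

lemma lookup_pderiv_complete_hom_on:
  "finite V \<Longrightarrow>
     Poly_Mapping.lookup (pderiv_var i (complete_hom_on V d)) a =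
       (if a + var_monomial i \<in> monomials_of_degree V d
        then of_nat (Poly_Mapping.lookup a i + 1) else 0)"
  by (simp add: lookup_pderiv_var lookup_complete_hom_on)

lemma keys_pderiv_complete_hom_on:
  "finite V \<Longrightarrow> Poly_Mapping.keys (pderiv_var i (complete_hom_on V (Suc d))) \<subseteq> monomials_of_degree V d"
  by (auto simp: in_keys_iff lookup_pderiv_complete_hom_on split: if_splits)

lemma lookup_var_mult_pderiv_complete_hom_on:
  assumes "finite V"
  shows "Poly_Mapping.lookup (var i * pderiv_var i (complete_hom_on V d)) a =
    (if a \<in> monomials_of_degree V d then of_nat (Poly_Mapping.lookup a i) else 0)"
proof (cases "Poly_Mapping.lookup a i = 0")
  case False
  then have "a - var_monomial i + var_monomial i = a"
    by (metis add.commute var_monomial_add_diff_iff)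
  moreover have "Poly_Mapping.lookup a i = Suc (Poly_Mapping.lookup (a - var_monomial i) i)"
    using False by (simp add: lookup_minus)
  ultimately show ?thesis
    using assms by (simp add: lookup_var_mult lookup_pderiv_complete_hom_on)
qed (simp add: lookup_var_mult)

lemma pderiv_complete_hom_on_Suc:
  assumes "finite V" "i \<in> V"
  shows "pderiv_var i (complete_hom_on V (Suc d)) =
    complete_hom_on V d + var i * pderiv_var i (complete_hom_on V d)"
  using assms
  by (intro poly_mapping_eqI) (simp add: lookup_add lookup_pderiv_complete_hom_on
    lookup_complete_hom_on lookup_var_mult_pderiv_complete_hom_on)

lemma euler_complete_hom_on:
  assumes "finite V"
  shows "of_nat d * complete_hom_on V d = (\<Sum>i\<in>V. var i * pderiv_var i (complete_hom_on V d))"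
proof (rule poly_mapping_eqI)
  fix a
  have "(\<Sum>i\<in>V. of_nat (Poly_Mapping.lookup a i)) = (of_nat d :: complex)"
    if "a \<in> monomials_of_degree V d"
    using that assms mdeg_eq_sum[of V a] by (simp add: monomials_of_degree_def flip: of_nat_sum)
  then show "Poly_Mapping.lookup (of_nat d * complete_hom_on V d) a =
    Poly_Mapping.lookup (\<Sum>i\<in>V. var i * pderiv_var i (complete_hom_on V d)) a"
    using assms by (simp add: lookup_of_nat_mult lookup_complete_hom_on lookup_sum
      lookup_var_mult_pderiv_complete_hom_on)
qed

lemma complete_hom_on_remove_var:
  assumes "finite V" "i \<in> V"
  shows "complete_hom_on V (Suc d) = complete_hom_on (V - {i}) (Suc d) + var i * complete_hom_on V d"
proof (rule poly_mapping_eqI)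
  fix a
  show "Poly_Mapping.lookup (complete_hom_on V (Suc d)) a =
    Poly_Mapping.lookup (complete_hom_on (V - {i}) (Suc d) + var i * complete_hom_on V d) a"
  proof (cases "Poly_Mapping.lookup a i = 0")
    case True
    then have "a \<in> monomials_of_degree (V - {i}) (Suc d) \<longleftrightarrow> a \<in> monomials_of_degree V (Suc d)"
      by (auto simp: monomials_of_degree_def in_keys_iff)
    with True assms show ?thesis
      by (simp add: lookup_add lookup_var_mult lookup_complete_hom_on)
  next
    case False
    then have "i \<in> Poly_Mapping.keys a"
      by (simp add: in_keys_iff)
    then have "a \<notin> monomials_of_degree (V - {i}) (Suc d)"
      by (auto simp: monomials_of_degree_def)
    with False assms show ?thesis
      by (simp add: lookup_add lookup_var_mult lookup_complete_hom_on
        diff_var_monomial_in_monomials_of_degree_iff)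
  qed
qed

lemma complete_hom_on_singleton:
  "complete_hom_on {i} d = Poly_Mapping.single (Poly_Mapping.single i d) 1"
proof -
  have "monomials_of_degree {i} d = {Poly_Mapping.single i d}"
  proof safe
    fix a assume a: "a \<in> monomials_of_degree {i} d"
    then have "Poly_Mapping.keys a \<subseteq> {i}" and "Poly_Mapping.lookup a i = d"
      by (auto simp: monomials_of_degree_def mdeg_eq_sum[of "{i}"])
    then show "a = Poly_Mapping.single i d"
      by (intro poly_mapping_eqI) (auto simp: lookup_single when_def in_keys_iff)
  qed (simp add: monomials_of_degree_def)
  then show ?thesis
    by (simp add: complete_hom_on_def)
qed

lemma in_vars_single: "Poly_Mapping.keys a \<subseteq> {..<n} \<Longrightarrow> in_vars n (Poly_Mapping.single a c)"
  by (simp add: in_vars_def)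

lemma in_vars_var: "i < n \<Longrightarrow> in_vars n (var i)"
  by (simp add: var_def var_monomial_def in_vars_single)

lemma in_vars_const_poly: "in_vars n (const_poly c)"
  by (simp add: const_poly_def in_vars_single)

lemma in_vars_add: "in_vars n p \<Longrightarrow> in_vars n q \<Longrightarrow> in_vars n (p + q)"
  unfolding in_vars_def using keys_add[of p q] by blast

lemma in_vars_diff: "in_vars n p \<Longrightarrow> in_vars n q \<Longrightarrow> in_vars n (p - q)"
  unfolding in_vars_def using keys_diff[of p q] by blast

lemma in_vars_mult:
  assumes "in_vars n p" "in_vars n q"
  shows "in_vars n (p * q)"
  unfolding in_vars_def
proof
  fix m assume "m \<in> Poly_Mapping.keys (p * q)"
  then obtain a b where "m = a + b" "a \<in> Poly_Mapping.keys p" "b \<in> Poly_Mapping.keys q"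
    using keys_mult by blast
  then show "Poly_Mapping.keys m \<subseteq> {..<n}"
    using assms keys_add[of a b] unfolding in_vars_def by blast
qed

context
  fixes n :: nat and f :: "nat \<Rightarrow> mpoly"
begin

lemma gen_ideal_combination:
  "(\<And>i. i < n \<Longrightarrow> in_vars n (g i)) \<Longrightarrow> (\<Sum>i<n. g i * f i) \<in> gen_ideal n f"
  unfolding gen_ideal_def by blast

lemma gen_ideal_zero: "0 \<in> gen_ideal n f"
  using gen_ideal_combination[of "\<lambda>_. 0"] by (simp add: in_vars_def)

lemma gen_ideal_add:
  assumes "p \<in> gen_ideal n f" "q \<in> gen_ideal n f"
  shows "p + q \<in> gen_ideal n f"
proof -
  obtain g h where "\<forall>i<n. in_vars n (g i) \<and> in_vars n (h i)"
    and "p + q = (\<Sum>i<n. (g i + h i) * f i)"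
    using assms by (auto simp: gen_ideal_def sum.distrib distrib_right)
  then show ?thesis
    by (simp add: gen_ideal_combination in_vars_add)
qed

lemma gen_ideal_diff:
  assumes "p \<in> gen_ideal n f" "q \<in> gen_ideal n f"
  shows "p - q \<in> gen_ideal n f"
proof -
  obtain g h where "\<forall>i<n. in_vars n (g i) \<and> in_vars n (h i)"
    and "p - q = (\<Sum>i<n. (g i - h i) * f i)"
    using assms by (auto simp: gen_ideal_def sum_subtractf left_diff_distrib)
  then show ?thesis
    by (simp add: gen_ideal_combination in_vars_diff)
qed

lemma gen_ideal_mult_left:
  assumes "in_vars n q" "p \<in> gen_ideal n f"
  shows "q * p \<in> gen_ideal n f"
proof -
  obtain g where "\<forall>i<n. in_vars n (g i)" and "q * p = (\<Sum>i<n. (q * g i) * f i)"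
    using assms(2) by (auto simp: gen_ideal_def sum_distrib_left mult.assoc)
  then show ?thesis
    using assms(1) by (simp add: gen_ideal_combination in_vars_mult)
qed

lemma gen_ideal_sum: "(\<And>x. x \<in> A \<Longrightarrow> p x \<in> gen_ideal n f) \<Longrightarrow> sum p A \<in> gen_ideal n f"
  by (induction A rule: infinite_finite_induct) (auto simp: gen_ideal_zero gen_ideal_add)

lemma generator_in_gen_ideal:
  assumes "i < n"
  shows "f i \<in> gen_ideal n f"
proof -
  have "(\<Sum>j<n. (if j = i then 1 else 0) * f j) = (\<Sum>j<n. if j = i then f j else 0)"
    by (rule sum.cong) auto
  with assms have "(\<Sum>j<n. (if j = i then 1 else 0) * f j) = f i"
    by simp
  then show ?thesis
    using gen_ideal_combination[of "\<lambda>j. if j = i then 1 else 0"] by (simp add: in_vars_def)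
qed

lemma gen_ideal_of_nat_mult_cancel:
  assumes "of_nat d * p \<in> gen_ideal n f" "d \<noteq> 0"
  shows "p \<in> gen_ideal n f"
proof -
  have "const_poly (inverse (of_nat d)) * (of_nat d * p) \<in> gen_ideal n f"
    by (rule gen_ideal_mult_left[OF in_vars_const_poly assms(1)])
  moreover have "const_poly (inverse (of_nat d)) * (of_nat d * p) = p"
    using assms(2) by (simp add: const_poly_def mult.assoc[symmetric] mult_single flip: single_of_nat)
  ultimately show ?thesis
    by simp
qed

end

abbreviation jacobian_ideal :: "nat \<Rightarrow> mpoly \<Rightarrow> mpoly set" where
  "jacobian_ideal n p \<equiv> gen_ideal n (\<lambda>i. pderiv_var i p)"

lemma complete_hom_in_gen_ideal_if_pderivs:
  assumes "\<And>i. i < n \<Longrightarrow> pderiv_var i (complete_hom n d) \<in> gen_ideal n f" "d \<noteq> 0"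
  shows "complete_hom n d \<in> gen_ideal n f"
proof (rule gen_ideal_of_nat_mult_cancel[OF _ assms(2)])
  have "(\<Sum>i<n. var i * pderiv_var i (complete_hom n d)) \<in> gen_ideal n f"
    using assms(1) by (intro gen_ideal_sum gen_ideal_mult_left in_vars_var) auto
  then show "of_nat d * complete_hom n d \<in> gen_ideal n f"
    by (simp add: complete_hom_eq_complete_hom_on euler_complete_hom_on)
qed

lemma complete_hom_in_jacobian_ideal:
  assumes "k \<noteq> 0" "k \<le> d"
  shows "complete_hom n d \<in> jacobian_ideal n (complete_hom n k)"
proof -
  have "\<forall>i<n. pderiv_var i (complete_hom n d) \<in> jacobian_ideal n (complete_hom n k)"
    using assms(2)
  proof (induction d rule: dec_induct)
    case base
    then show ?case
      by (auto intro: generator_in_gen_ideal)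
  next
    case (step d)
    then have "complete_hom n d \<in> jacobian_ideal n (complete_hom n k)"
      using assms(1) by (intro complete_hom_in_gen_ideal_if_pderivs) auto
    with step.IH show ?case
      by (auto simp: complete_hom_eq_complete_hom_on pderiv_complete_hom_on_Suc
        intro!: gen_ideal_add gen_ideal_mult_left in_vars_var)
  qed
  with assms show ?thesis
    by (intro complete_hom_in_gen_ideal_if_pderivs) auto
qed

lemma complete_hom_on_diff_in_jacobian_ideal:
  assumes "T \<subseteq> {..<n}" "k \<noteq> 0" "k + card T \<le> d"
  shows "complete_hom_on ({..<n} - T) d \<in> jacobian_ideal n (complete_hom n k)"
  using finite_subset[OF assms(1) finite_lessThan] assms(1,3)
proof (induction T arbitrary: d rule: finite_subset_induct)
  case empty
  then show ?case
    using complete_hom_in_jacobian_ideal[OF assms(2)] by (simp add: complete_hom_eq_complete_hom_on)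
next
  case (insert i T)
  then obtain d' where d: "d = Suc d'" and d': "k + card T \<le> d'"
    by (cases d) auto
  have IH: "complete_hom_on ({..<n} - T) e \<in> jacobian_ideal n (complete_hom n k)"
    if "k + card T \<le> e" for e
    using insert.IH insert.prems(1) that by blast
  have "i \<in> {..<n} - T"
    using insert.hyps by simp
  moreover have "{..<n} - insert i T = {..<n} - T - {i}"
    by auto
  ultimately have "complete_hom_on ({..<n} - insert i T) d =
      complete_hom_on ({..<n} - T) (Suc d') - var i * complete_hom_on ({..<n} - T) d'"
    using complete_hom_on_remove_var[of "{..<n} - T" i d'] by (simp add: d)
  also have "\<dots> \<in> jacobian_ideal n (complete_hom n k)"
    using insert.hyps(2) d' by (intro gen_ideal_diff gen_ideal_mult_left in_vars_var IH) auto
  finally show ?case .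
qed

lemma pure_power_in_jacobian_ideal:
  assumes "i < n" "k \<noteq> 0"
  shows "Poly_Mapping.single (Poly_Mapping.single i (k + n - 1)) 1 \<in> jacobian_ideal n (complete_hom n k)"
proof -
  have "{..<n} - ({..<n} - {i}) = {i}" and "card ({..<n} - {i}) = n - 1"
    using assms(1) by auto
  then show ?thesis
    using complete_hom_on_diff_in_jacobian_ideal[of "{..<n} - {i}" n k "k + n - 1"] assms
    by (simp add: complete_hom_on_singleton)
qed

lemma monomial_in_gen_ideal_if_pure_power:
  assumes "Poly_Mapping.keys a \<subseteq> {..<n}" "N \<le> Poly_Mapping.lookup a i"
    and "Poly_Mapping.single (Poly_Mapping.single i N) 1 \<in> gen_ideal n f"
  shows "Poly_Mapping.single a c \<in> gen_ideal n f"
proof -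
  have "Poly_Mapping.single a c =
      Poly_Mapping.single (a - Poly_Mapping.single i N) c * Poly_Mapping.single (Poly_Mapping.single i N) 1"
    using single_add_diff_single[OF assms(2)] by (simp add: mult_single add.commute)
  moreover have "Poly_Mapping.keys (a - Poly_Mapping.single i N) \<subseteq> Poly_Mapping.keys a"
    by (auto simp: in_keys_iff lookup_minus)
  ultimately show ?thesis
    using assms(1,3) by (simp add: gen_ideal_mult_left in_vars_single)
qed

lemma finite_monomials_exponents_below:
  "finite {a :: nat \<Rightarrow>\<^sub>0 nat. Poly_Mapping.keys a \<subseteq> {..<n} \<and> (\<forall>j<n. Poly_Mapping.lookup a j < N)}"
    (is "finite ?A")
proof (rule finite_subset)
  have "Poly_Mapping.lookup a j \<le> N" if "a \<in> ?A" for a j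
  proof (cases "j < n")
    case False
    with that have "j \<notin> Poly_Mapping.keys a"
      by auto
    then show ?thesis
      by (simp add: in_keys_iff)
  qed (use that in auto)
  then show "?A \<subseteq> {a. Poly_Mapping.keys a \<subseteq> {..<n} \<and> (\<forall>j. Poly_Mapping.lookup a j \<le> N)}"
    by auto
qed (simp add: finite_monomials_bounded)

lemma diff_sum_monomials_eq:
  assumes "finite A"
  shows "(p :: mpoly) - (\<Sum>a\<in>A. Poly_Mapping.single a (Poly_Mapping.lookup p a)) =
    (\<Sum>a\<in>Poly_Mapping.keys p - A. Poly_Mapping.single a (Poly_Mapping.lookup p a))"
proof -
  let ?m = "\<lambda>a. Poly_Mapping.single a (Poly_Mapping.lookup p a)"
  have "p = (\<Sum>a\<in>Poly_Mapping.keys p. ?m a)"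
    by (rule poly_eq_sum_monomials)
  also have "\<dots> = (\<Sum>a\<in>Poly_Mapping.keys p - A. ?m a) + (\<Sum>a\<in>Poly_Mapping.keys p \<inter> A. ?m a)"
    by (subst add.commute) (rule sum.Int_Diff, simp)
  also have "(\<Sum>a\<in>Poly_Mapping.keys p \<inter> A. ?m a) = (\<Sum>a\<in>A. ?m a)"
    using assms by (intro sum.mono_neutral_left) (auto simp: in_keys_iff)
  finally show ?thesis
    unfolding diff_eq_eq .
qed

lemma finite_dim_quotient_if_pure_powers:
  assumes "\<And>i. i < n \<Longrightarrow> Poly_Mapping.single (Poly_Mapping.single i N) 1 \<in> gen_ideal n f"
  shows "finite_dim_quotient n (gen_ideal n f)"
proof -
  define A where "A = {a. Poly_Mapping.keys a \<subseteq> {..<n} \<and> (\<forall>j<n. Poly_Mapping.lookup a j < N)}"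
  define B where "B = (\<lambda>a. Poly_Mapping.single a (1 :: complex)) ` A"
  have "finite A"
    unfolding A_def by (rule finite_monomials_exponents_below)
  have inj: "inj_on (\<lambda>a. Poly_Mapping.single a (1 :: complex)) A"
    by (rule inj_onI) (metis lookup_single_eq lookup_single_not_eq one_neq_zero)
  show ?thesis
    unfolding finite_dim_quotient_def
  proof (intro exI conjI allI impI ballI)
    show "finite B"
      using \<open>finite A\<close> by (simp add: B_def)
    show "in_vars n b" if "b \<in> B" for b
      using that by (auto simp: B_def A_def in_vars_single)
    fix p assume p: "in_vars n p"
    let ?c = "\<lambda>b. Poly_Mapping.lookup p (the_elem (Poly_Mapping.keys b))"
    have "(\<Sum>b\<in>B. const_poly (?c b) * b) = (\<Sum>a\<in>A. Poly_Mapping.single a (Poly_Mapping.lookup p a))"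
      by (simp add: B_def sum.reindex[OF inj] const_poly_def mult_single)
    then have "p - (\<Sum>b\<in>B. const_poly (?c b) * b) =
        (\<Sum>a\<in>Poly_Mapping.keys p - A. Poly_Mapping.single a (Poly_Mapping.lookup p a))"
      using diff_sum_monomials_eq[OF \<open>finite A\<close>] by simp
    also have "\<dots> \<in> gen_ideal n f"
    proof (rule gen_ideal_sum)
      fix a assume a: "a \<in> Poly_Mapping.keys p - A"
      then have "Poly_Mapping.keys a \<subseteq> {..<n}"
        using p by (auto simp: in_vars_def)
      moreover from this a obtain j where "j < n" "N \<le> Poly_Mapping.lookup a j"
        by (auto simp: A_def not_less)
      ultimately show "Poly_Mapping.single a (Poly_Mapping.lookup p a) \<in> gen_ideal n f"
        using assms by (blast intro: monomial_in_gen_ideal_if_pure_power)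
    qed
    finally show "p - (\<Sum>b\<in>B. const_poly (?c b) * b) \<in> gen_ideal n f" .
  qed
qed

theorem corollary16:
  fixes n k :: nat
  assumes "k \<ge> 2" and "n \<ge> 1"
  shows "hom_sop n (\<lambda>i. pderiv_var i (complete_hom n k))"
proof -
  obtain d where k: "k = Suc d" and "d > 0"
    using assms(1) by (cases k) auto
  have "in_vars n (pderiv_var i (complete_hom n k)) \<and> homogeneous d (pderiv_var i (complete_hom n k))"
    for i
    using keys_pderiv_complete_hom_on[of "{..<n}" i d]
    by (auto simp: k complete_hom_eq_complete_hom_on in_vars_def homogeneous_def monomials_of_degree_def)
  moreover have "finite_dim_quotient n (jacobian_ideal n (complete_hom n k))"
    using pure_power_in_jacobian_ideal[of _ n k] k by (intro finite_dim_quotient_if_pure_powers) simp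
  ultimately show ?thesis
    unfolding hom_sop_def using \<open>d > 0\<close> by blast
qed

end
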